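(* Let $(\Omega,T)$ be a minimal subshift over a finite alphabet $A$ such that no word in $L_5(\Omega)$ has repeated letters, and suppose the language $L(\Omega)$ is recursive. Then: (1) there is an algorithm which, given $w,v\in L(\Omega)$ and $i,j\in\mathbb Z$, decides whether $(v,j)\subseteq(w,i)$; (2) there is an algorithm which, given $w,v\in L(\Omega)$ and $i,j\in\mathbb Z$, decides whether $(w,i)$ and $(v,j)$ are $3$-disjoint; (3) for every $w\in L(\Omega)$ and $i\in\mathbb Z$, the set of cylinder partitions of $(w,i)$ is a recursive subset of $\mathcal{FS}(A^*\times\mathbb Z)$, the set of all finite subsets of $A^*\times\mathbb Z$.
   Context: $T$ is the left shift $(T\omega)_m=\omega_{m+1}$ on $A^{\mathbb Z}$; a minimal subshift is a closed shift-invariant $\Omega\subseteq A^{\mathbb Z}$ with every orbit dense. $A^*$ is the set of nonempty finite words over $A$, indexed from $0$: $w=w_0\cdots w_{|w|-1}$. $L_m(\Omega)$ is the set of words of length $m$ occurring in sequences of $\Omega$ and $L(\Omega)=\bigcup_m L_m(\Omega)$; it is recursive if membership is algorithmically decidable. For a word $v$ and $i\in\mathbb Z$, $(v,i)=\{\omega\in\Omega:\omega_{k-i}=v_k,\ 0\leq k\leq|v|-1\}$. A finite set $S\subseteq A^*\times\mathbb Z$ is a cylinder partition of $(w,i)$ if the sets $(s,k)$, $(s,k)\in S$, are cylinder sets (with $s\in L(\Omega)$) that are pairwise disjoint and have union $(w,i)$. Two clopen sets $U,V$ are $3$-disjoint if $(U\cup TU\cup T^2U)\cap(V\cup TV\cup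 T^2V)=\emptyset$. *)

theory Defs
  imports Main "HOL-Library.Nat_Bijection" "HOL-Library.Disjoint_Sets"
begin

text \<open>Codes of partial recursive functions on lists of naturals.  Argument
  lists may have any length; missing arguments are read as 0.\<close>

datatype recf = Zr | Sc | Proj nat | Comp recf "recf list" | Prim recf recf | Mn recf

definition arg :: "nat list \<Rightarrow> nat \<Rightarrow> nat" where
  "arg xs i = (if i < length xs then xs ! i else 0)"

inductive eval :: "recf \<Rightarrow> nat list \<Rightarrow> nat \<Rightarrow> bool" where
  eval_Zr: "eval Zr xs 0"
| eval_Sc: "eval Sc xs (Suc (arg xs 0))"
| eval_Proj: "eval (Proj i) xs (arg xs i)"
| eval_Comp: "\<lbrakk> length ys = length gs; \<forall>k<length gs. eval (gs ! k) xs (ys ! k); eval f ys y \<rbrakk>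
      \<Longrightarrow> eval (Comp f gs) xs y"
| eval_Prim_Nil: "eval f [] y \<Longrightarrow> eval (Prim f g) [] y"
| eval_Prim_0: "eval f xs y \<Longrightarrow> eval (Prim f g) (0 # xs) y"
| eval_Prim_Suc: "\<lbrakk> eval (Prim f g) (n # xs) r; eval g (n # r # xs) y \<rbrakk>
      \<Longrightarrow> eval (Prim f g) (Suc n # xs) y"
| eval_Mn: "\<lbrakk> eval f (n # xs) 0; \<forall>m<n. \<exists>k. eval f (m # xs) (Suc k) \<rbrakk>
      \<Longrightarrow> eval (Mn f) xs n"

definition decides :: "recf \<Rightarrow> nat list set \<Rightarrow> (nat list \<Rightarrow> bool) \<Rightarrow> bool" where
  "decides f D P \<longleftrightarrow> (\<forall>xs\<in>D. eval f xs (if P xs then 1 else 0))"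

definition word_code :: "('a \<Rightarrow> nat) \<Rightarrow> 'a list \<Rightarrow> nat" where
  "word_code e w = list_encode (map e w)"

definition pair_code :: "('a \<Rightarrow> nat) \<Rightarrow> 'a list \<times> int \<Rightarrow> nat" where
  "pair_code e p = prod_encode (word_code e (fst p), int_encode (snd p))"

definition fset_code :: "('a \<Rightarrow> nat) \<Rightarrow> ('a list \<times> int) set \<Rightarrow> nat" where
  "fset_code e S = set_encode (pair_code e ` S)"

definition shift :: "(int \<Rightarrow> 'a) \<Rightarrow> (int \<Rightarrow> 'a)" ("T") where
  "T \<omega> = (\<lambda>m. \<omega> (m + 1))"

text \<open>Closedness in the product (of discrete) topology on \<open>A\<^sup>\<int>\<close>, written out.\<close>
definition closed_seqs :: "(int \<Rightarrow> 'a) set \<Rightarrow> bool" where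
  "closed_seqs \<Omega> \<longleftrightarrow>
     (\<forall>\<omega>. (\<forall>N::nat. \<exists>\<omega>'\<in>\<Omega>. \<forall>m. \<bar>m\<bar> \<le> int N \<longrightarrow> \<omega>' m = \<omega> m) \<longrightarrow> \<omega> \<in> \<Omega>)"

text \<open>Every (two-sided) orbit is dense: the point \<open>T\<^sup>n \<omega>\<close> (\<open>n \<in> \<int>\<close>) is
  \<open>\<lambda>m. \<omega> (m + n)\<close>.\<close>
definition minimal_subshift :: "(int \<Rightarrow> 'a) set \<Rightarrow> bool" where
  "minimal_subshift \<Omega> \<longleftrightarrow> \<Omega> \<noteq> {} \<and> closed_seqs \<Omega> \<and> T ` \<Omega> = \<Omega> \<and>
     (\<forall>\<omega>\<in>\<Omega>. \<forall>\<omega>'\<in>\<Omega>. \<forall>N::nat. \<exists>n::int.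
        \<forall>m. \<bar>m\<bar> \<le> int N \<longrightarrow> \<omega> (m + n) = \<omega>' m)"

definition Lm :: "(int \<Rightarrow> 'a) set \<Rightarrow> nat \<Rightarrow> 'a list set" where
  "Lm \<Omega> m = {w. length w = m \<and> (\<exists>\<omega>\<in>\<Omega>. \<exists>k::int. \<forall>i<m. \<omega> (k + int i) = w ! i)}"

definition Lang :: "(int \<Rightarrow> 'a) set \<Rightarrow> 'a list set" where
  "Lang \<Omega> = (\<Union>m\<in>{1..}. Lm \<Omega> m)"

definition cyl :: "(int \<Rightarrow> 'a) set \<Rightarrow> 'a list \<Rightarrow> int \<Rightarrow> (int \<Rightarrow> 'a) set" where
  "cyl \<Omega> v i = {\<omega>\<in>\<Omega>. \<forall>k<length v. \<omega> (int k - i) = v ! k}"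

definition three_disjoint :: "(int \<Rightarrow> 'a) set \<Rightarrow> (int \<Rightarrow> 'a) set \<Rightarrow> bool" where
  "three_disjoint U V \<longleftrightarrow>
     (U \<union> T ` U \<union> T ` T ` U) \<inter> (V \<union> T ` V \<union> T ` T ` V) = {}"

definition cylinder_partition ::
  "(int \<Rightarrow> 'a) set \<Rightarrow> ('a list \<times> int) set \<Rightarrow> 'a list \<Rightarrow> int \<Rightarrow> bool" where
  "cylinder_partition \<Omega> S w i \<longleftrightarrow> finite S \<and>
     (\<forall>(s,k)\<in>S. s \<in> Lang \<Omega>) \<and>
     disjoint_family_on (\<lambda>(s,k). cyl \<Omega> s k) S \<and>
     (\<Union>(s,k)\<in>S. cyl \<Omega> s k) = cyl \<Omega> w i"

end

theory Submission
  imports Defs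
begin

text \<open>For a shift-invariant \<open>\<Omega>\<close>, each of the three properties of cylinders is a property of
  the window \<open>[-K, K)\<close> of the points of \<open>\<Omega>\<close>, once \<open>K\<close> exceeds the lengths and positions of all
  words involved.  As \<open>\<Omega>\<close> is shift invariant, these windows are exactly the words of
  \<open>L\<^sub>2\<^sub>K(\<Omega>)\<close>, so every property becomes a finite check over the words of one length, run with
  the decider of \<open>L(\<Omega>)\<close>; \<open>K\<close> is computed from the codes of the input.\<close>

section \<open>Computable functions\<close>

definition depends_only_on :: "nat \<Rightarrow> (nat list \<Rightarrow> nat) \<Rightarrow> bool" where
  "depends_only_on n g \<longleftrightarrow> (\<forall>xs ys. (\<forall>k<n. arg xs k = arg ys k) \<longrightarrow> g xs = g ys)"

text \<open>The bound on the number of arguments read is what allows argument lists to be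
  rearranged by composition (\<open>computable_tl\<close>).\<close>

definition computable :: "(nat list \<Rightarrow> nat) \<Rightarrow> bool" where
  "computable g \<longleftrightarrow> (\<exists>f. \<forall>xs. eval f xs (g xs)) \<and> (\<exists>n. depends_only_on n g)"

lemma depends_only_on_mono: "depends_only_on n g \<Longrightarrow> n \<le> m \<Longrightarrow> depends_only_on m g"
  unfolding depends_only_on_def by auto

lemma arg_Cons_0 [simp]: "arg (x # xs) 0 = x"
  by (simp add: arg_def)

lemma arg_Cons_Suc [simp]: "arg (x # xs) (Suc k) = arg xs k"
  by (simp add: arg_def)

lemma arg_Nil [simp]: "arg [] k = 0"
  by (simp add: arg_def)

lemma arg_tl: "arg (tl xs) k = arg xs (Suc k)"
  by (cases xs) (auto simp: arg_def)

lemma arg_map_upt: "k < n \<Longrightarrow> arg (map f [0..<n]) k = f k"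
  by (simp add: arg_def)

lemma computable_zero: "computable (\<lambda>xs. 0)"
  unfolding computable_def depends_only_on_def by (blast intro: eval_Zr)

lemma computable_Suc_arg: "computable (\<lambda>xs. Suc (arg xs 0))"
  unfolding computable_def depends_only_on_def by (blast intro: eval_Sc)

lemma computable_arg: "computable (\<lambda>xs. arg xs i)"
  unfolding computable_def depends_only_on_def by (blast intro: eval_Proj)

lemma computable_programs:
  assumes "\<forall>g\<in>set gs. computable g"
  shows "\<exists>fs N. length fs = length gs \<and> (\<forall>k<length gs. \<forall>xs. eval (fs ! k) xs ((gs ! k) xs)) \<and>
    (\<forall>g\<in>set gs. depends_only_on N g)"
  using assms
proof (induction gs)
  case Nil
  then show ?case by auto
next
  case (Cons g gs)
  then obtain fs N where fs: "length fs = length gs"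
      "\<forall>k<length gs. \<forall>xs. eval (fs ! k) xs ((gs ! k) xs)" "\<forall>g\<in>set gs. depends_only_on N g"
    by auto
  from Cons.prems obtain f n where f: "\<forall>xs. eval f xs (g xs)" "depends_only_on n g"
    unfolding computable_def by auto
  show ?case
    using fs f by (intro exI[of _ "f # fs"] exI[of _ "N + n"])
      (auto simp: nth_Cons split: nat.split intro: depends_only_on_mono)
qed

lemma computable_comp:
  assumes "computable h" "\<forall>g\<in>set gs. computable g"
  shows "computable (\<lambda>xs. h (map (\<lambda>g. g xs) gs))"
proof -
  from assms(1) obtain fh where fh: "\<forall>xs. eval fh xs (h xs)"
    unfolding computable_def by auto
  from computable_programs[OF assms(2)] obtain fs N where fs: "length fs = length gs"
      "\<forall>k<length gs. \<forall>xs. eval (fs ! k) xs ((gs ! k) xs)" "\<forall>g\<in>set gs. depends_only_on N g"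
    by auto
  have "\<forall>xs. eval (Comp fh fs) xs (h (map (\<lambda>g. g xs) gs))"
    using fs fh by (auto intro!: eval_Comp)
  moreover have "depends_only_on N (\<lambda>xs. h (map (\<lambda>g. g xs) gs))"
    using fs(3) unfolding depends_only_on_def by (metis (mono_tags, lifting) map_eq_conv)
  ultimately show ?thesis
    unfolding computable_def by blast
qed

lemma computable_comp1:
  "computable (\<lambda>xs. F (arg xs 0)) \<Longrightarrow> computable g \<Longrightarrow> computable (\<lambda>xs. F (g xs))"
  using computable_comp[of "\<lambda>xs. F (arg xs 0)" "[g]"] by simp

lemma computable_comp2:
  "computable (\<lambda>xs. F (arg xs 0) (arg xs 1)) \<Longrightarrow> computable g1 \<Longrightarrow> computable g2 \<Longrightarrow>
    computable (\<lambda>xs. F (g1 xs) (g2 xs))"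
  using computable_comp[of "\<lambda>xs. F (arg xs 0) (arg xs 1)" "[g1, g2]"] by (simp add: numeral_eq_Suc)

lemma computable_comp3:
  "computable (\<lambda>xs. F (arg xs 0) (arg xs 1) (arg xs 2)) \<Longrightarrow>
    computable g1 \<Longrightarrow> computable g2 \<Longrightarrow> computable g3 \<Longrightarrow>
    computable (\<lambda>xs. F (g1 xs) (g2 xs) (g3 xs))"
  using computable_comp[of "\<lambda>xs. F (arg xs 0) (arg xs 1) (arg xs 2)" "[g1, g2, g3]"]
  by (simp add: numeral_eq_Suc)

lemma computable_comp_partial:
  assumes "computable h" "\<And>xs. eval f [h xs] (R (h xs))"
  shows "computable (\<lambda>xs. R (h xs))"
proof -
  from assms(1) obtain fh n where fh: "\<forall>xs. eval fh xs (h xs)" "depends_only_on n h"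
    unfolding computable_def by auto
  have "eval (Comp f [fh]) xs (R (h xs))" for xs
    by (rule eval_Comp[where ys="[h xs]"]) (use fh assms(2) in auto)
  moreover have "depends_only_on n (\<lambda>xs. R (h xs))"
    using fh(2) unfolding depends_only_on_def by metis
  ultimately show ?thesis
    unfolding computable_def by blast
qed

lemma computable_tl:
  assumes "computable g"
  shows "computable (\<lambda>ys. g (tl ys))"
proof -
  from assms obtain n where n: "depends_only_on n g"
    unfolding computable_def by auto
  have "g (tl ys) = g (map (\<lambda>h. h ys) (map (\<lambda>k ys. arg ys (Suc k)) [0..<n]))" for ys
  proof -
    have "\<forall>k<n. arg (tl ys) k = arg (map (\<lambda>k. arg ys (Suc k)) [0..<n]) k"
      by (simp add: arg_map_upt arg_tl)
    then show ?thesis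
      using n unfolding depends_only_on_def by (simp add: comp_def)
  qed
  then show ?thesis
    by (simp only:) (rule computable_comp[OF assms], auto intro: computable_arg)
qed

fun prim_rec :: "(nat list \<Rightarrow> nat) \<Rightarrow> (nat list \<Rightarrow> nat) \<Rightarrow> nat \<Rightarrow> nat list \<Rightarrow> nat" where
  "prim_rec b s 0 ys = b ys"
| "prim_rec b s (Suc n) ys = s (n # prim_rec b s n ys # ys)"

lemma depends_only_on_prim_rec:
  assumes "depends_only_on nb b" "depends_only_on ns s"
  shows "depends_only_on (Suc (nb + ns)) (\<lambda>xs. prim_rec b s (arg xs 0) (tl xs))"
proof -
  have pr: "prim_rec b s n ys = prim_rec b s n zs" if "\<forall>k<nb + ns. arg ys k = arg zs k" for n ys zs
  proof (induction n)
    case 0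
    then show ?case using assms(1) that unfolding depends_only_on_def by auto
  next
    case (Suc n)
    have "arg (n # prim_rec b s n ys # ys) k = arg (n # prim_rec b s n zs # zs) k" if "k < ns" for k
      using \<open>k < ns\<close> Suc.IH \<open>\<forall>k<nb + ns. arg ys k = arg zs k\<close>
      by (cases k; cases "k - 1") auto
    then show ?case using assms(2) unfolding depends_only_on_def by simp
  qed
  show ?thesis
    unfolding depends_only_on_def
  proof (intro allI impI)
    fix xs ys :: "nat list" assume xs_ys: "\<forall>k<Suc (nb + ns). arg xs k = arg ys k"
    then have "\<forall>k<nb + ns. arg (tl xs) k = arg (tl ys) k" by (simp add: arg_tl)
    with xs_ys show "prim_rec b s (arg xs 0) (tl xs) = prim_rec b s (arg ys 0) (tl ys)"
      using pr by auto
  qed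
qed

lemma computable_prim_rec:
  assumes "computable b" "computable s"
  shows "computable (\<lambda>xs. prim_rec b s (arg xs 0) (tl xs))"
proof -
  obtain fb fs nb ns where fb: "\<forall>xs. eval fb xs (b xs)" and fs: "\<forall>xs. eval fs xs (s xs)"
    and "depends_only_on nb b" "depends_only_on ns s"
    using assms unfolding computable_def by auto
  have "eval (Prim fb fs) (n # ys) (prim_rec b s n ys)" for n ys
    by (induction n) (auto intro: eval_Prim_0 eval_Prim_Suc fb[rule_format] fs[rule_format])
  then have "eval (Prim fb fs) xs (prim_rec b s (arg xs 0) (tl xs))" for xs
    by (cases xs) (auto intro: eval_Prim_Nil fb[rule_format])
  with depends_only_on_prim_rec[OF \<open>depends_only_on nb b\<close> \<open>depends_only_on ns s\<close>] show ?thesis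
    unfolding computable_def by blast
qed

lemma computable_minimization:
  assumes "computable g" and ex: "\<And>xs. \<exists>n. g (n # xs) = 0"
  shows "computable (\<lambda>xs. LEAST n. g (n # xs) = 0)"
proof -
  obtain fg ng where fg: "\<forall>xs. eval fg xs (g xs)" and dg: "depends_only_on ng g"
    using assms(1) unfolding computable_def by auto
  have "eval (Mn fg) xs (LEAST n. g (n # xs) = 0)" for xs
  proof (rule eval_Mn)
    show "eval fg ((LEAST n. g (n # xs) = 0) # xs) 0"
      using fg LeastI_ex[OF ex[of xs]] by metis
    show "\<forall>m<(LEAST n. g (n # xs) = 0). \<exists>k. eval fg (m # xs) (Suc k)"
      using fg not_less_Least by (metis not0_implies_Suc)
  qed
  moreover have "depends_only_on ng (\<lambda>xs. LEAST n. g (n # xs) = 0)"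
    unfolding depends_only_on_def
  proof (intro allI impI)
    fix xs ys assume xs_ys: "\<forall>k<ng. arg xs k = arg ys k"
    have "arg (n # xs) k = arg (n # ys) k" if "k < ng" for n k
      using xs_ys that by (cases k) auto
    then have "g (n # xs) = g (n # ys)" for n
      using dg unfolding depends_only_on_def by blast
    then show "(LEAST n. g (n # xs) = 0) = (LEAST n. g (n # ys) = 0)" by simp
  qed
  ultimately show ?thesis
    unfolding computable_def by blast
qed

lemma computable_Suc: "computable g \<Longrightarrow> computable (\<lambda>xs. Suc (g xs))"
  by (rule computable_comp1[OF computable_Suc_arg])

lemma computable_const: "computable (\<lambda>xs. c)"
  by (induction c) (auto intro: computable_zero computable_Suc)

lemma computable_rec_nat:
  assumes "computable (\<lambda>xs. B (arg xs 0))" "computable (\<lambda>xs. S (arg xs 0) (arg xs 1) (arg xs 2))"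
    and "computable g1" "computable g2"
  shows "computable (\<lambda>xs. rec_nat (B (g2 xs)) (\<lambda>n r. S n r (g2 xs)) (g1 xs))"
proof -
  have "prim_rec (\<lambda>ys. B (arg ys 0)) (\<lambda>zs. S (arg zs 0) (arg zs 1) (arg zs 2)) n ys
      = rec_nat (B (arg ys 0)) (\<lambda>n r. S n r (arg ys 0)) n" for n ys
    by (induction n) (simp_all add: numeral_2_eq_2)
  then have "computable (\<lambda>xs. rec_nat (B (arg xs 1)) (\<lambda>n r. S n r (arg xs 1)) (arg xs 0))"
    using computable_prim_rec[OF assms(1,2)] by (simp add: arg_tl)
  then show ?thesis
    by (rule computable_comp2[where F="\<lambda>a y. rec_nat (B y) (\<lambda>n r. S n r y) a", OF _ assms(3,4)])
qed

lemma add_rec_nat: "y + a = rec_nat y (\<lambda>n r. Suc r) a"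
  by (induct a) simp_all

lemma mult_rec_nat: "a * y = rec_nat 0 (\<lambda>n r. r + y) a"
  by (induct a) simp_all

lemma diff_1_rec_nat: "a - 1 = rec_nat 0 (\<lambda>n r. n) (a::nat)"
  by (induct a) simp_all

lemma diff_rec_nat: "y - a = rec_nat y (\<lambda>n r. r - 1) (a::nat)"
  by (induct a) simp_all

lemma power_rec_nat: "(y::nat) ^ a = rec_nat 1 (\<lambda>n r. r * y) a"
  by (induct a) (auto simp: mult.commute)

lemma computable_add:
  assumes "computable g1" "computable g2"
  shows "computable (\<lambda>xs. g1 xs + g2 xs)"
proof -
  have "(\<lambda>xs. g1 xs + g2 xs) = (\<lambda>xs. rec_nat (g1 xs) (\<lambda>n r. Suc r) (g2 xs))"
    by (rule ext) (rule add_rec_nat)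
  with computable_rec_nat[of "\<lambda>y. y" "\<lambda>n r y. Suc r", OF computable_arg
      computable_Suc[OF computable_arg] assms(2,1)]
  show ?thesis by simp
qed

lemma computable_mult:
  assumes "computable g1" "computable g2"
  shows "computable (\<lambda>xs. g1 xs * g2 xs)"
proof -
  have "(\<lambda>xs. g1 xs * g2 xs) = (\<lambda>xs. rec_nat 0 (\<lambda>n r. r + g2 xs) (g1 xs))"
    by (rule ext) (rule mult_rec_nat)
  with computable_rec_nat[of "\<lambda>y. 0" "\<lambda>n r y. r + y", OF computable_const
      computable_add[OF computable_arg computable_arg] assms]
  show ?thesis by simp
qed

lemma computable_diff_1:
  assumes "computable g"
  shows "computable (\<lambda>xs. g xs - 1)"
proof -
  have "(\<lambda>xs. g xs - 1) = (\<lambda>xs. rec_nat 0 (\<lambda>n r. n) (g xs))"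
    by (rule ext) (rule diff_1_rec_nat)
  with computable_rec_nat[of "\<lambda>y. 0" "\<lambda>n r y. n", OF computable_const computable_arg assms
      computable_const]
  show ?thesis by simp
qed

lemma computable_diff:
  assumes "computable g1" "computable g2"
  shows "computable (\<lambda>xs. g1 xs - g2 xs)"
proof -
  have "(\<lambda>xs. g1 xs - g2 xs) = (\<lambda>xs. rec_nat (g1 xs) (\<lambda>n r. r - 1) (g2 xs))"
    by (rule ext) (rule diff_rec_nat)
  with computable_rec_nat[of "\<lambda>y. y" "\<lambda>n r y. r - 1", OF computable_arg
      computable_diff_1[OF computable_arg] assms(2,1)]
  show ?thesis by simp
qed

lemma computable_power:
  assumes "computable g1" "computable g2"
  shows "computable (\<lambda>xs. g1 xs ^ g2 xs)"
proof -
  have "(\<lambda>xs. g1 xs ^ g2 xs) = (\<lambda>xs. rec_nat 1 (\<lambda>n r. r * g1 xs) (g2 xs))"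
    by (rule ext) (rule power_rec_nat)
  with computable_rec_nat[of "\<lambda>y. 1" "\<lambda>n r y. r * y", OF computable_const
      computable_mult[OF computable_arg computable_arg] assms(2,1)]
  show ?thesis by simp
qed

definition decidable :: "(nat list \<Rightarrow> bool) \<Rightarrow> bool" where
  "decidable P \<longleftrightarrow> computable (\<lambda>xs. if P xs then (1::nat) else 0)"

lemma decidable_eq:
  assumes "computable g1" "computable g2"
  shows "decidable (\<lambda>xs. g1 xs = g2 xs)"
proof -
  have "(\<lambda>xs. if g1 xs = g2 xs then (1::nat) else 0) =
      (\<lambda>xs. 1 - ((g1 xs - g2 xs) + (g2 xs - g1 xs)))"
    by auto
  then show ?thesis
    unfolding decidable_def
    by (simp only:) (intro computable_diff computable_add computable_const assms)
qed

lemma decidable_less: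
  assumes "computable g1" "computable g2"
  shows "decidable (\<lambda>xs. g1 xs < g2 xs)"
proof -
  have "(\<lambda>xs. if g1 xs < g2 xs then (1::nat) else 0) = (\<lambda>xs. 1 - (1 - (g2 xs - g1 xs)))"
    by auto
  then show ?thesis
    unfolding decidable_def by (simp only:) (intro computable_diff computable_const assms)
qed

lemma decidable_le:
  assumes "computable g1" "computable g2"
  shows "decidable (\<lambda>xs. g1 xs \<le> g2 xs)"
  using decidable_less[OF assms(1) computable_Suc[OF assms(2)]] by (simp add: less_Suc_eq_le)

lemma decidable_not:
  assumes "decidable P"
  shows "decidable (\<lambda>xs. \<not> P xs)"
proof -
  have "(\<lambda>xs. if \<not> P xs then (1::nat) else 0) = (\<lambda>xs. 1 - (if P xs then 1 else 0))"
    by auto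
  then show ?thesis
    using assms unfolding decidable_def by (simp only:) (intro computable_diff computable_const)
qed

lemma decidable_conj:
  assumes "decidable P" "decidable Q"
  shows "decidable (\<lambda>xs. P xs \<and> Q xs)"
proof -
  have "(\<lambda>xs. if P xs \<and> Q xs then (1::nat) else 0) =
      (\<lambda>xs. (if P xs then 1 else 0) * (if Q xs then 1 else 0))"
    by auto
  then show ?thesis
    using assms unfolding decidable_def by (simp only:) (intro computable_mult)
qed

lemma decidable_disj:
  assumes "decidable P" "decidable Q"
  shows "decidable (\<lambda>xs. P xs \<or> Q xs)"
  using decidable_not[OF decidable_conj[OF decidable_not[OF assms(1)] decidable_not[OF assms(2)]]]
  by simp

lemma decidable_imp:
  assumes "decidable P" "decidable Q"
  shows "decidable (\<lambda>xs. P xs \<longrightarrow> Q xs)"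
  using decidable_disj[OF decidable_not[OF assms(1)] assms(2)] by simp

lemma decidable_const: "decidable (\<lambda>xs. b)"
  unfolding decidable_def by (rule computable_const)

lemma computable_If:
  assumes "decidable P" "computable a" "computable b"
  shows "computable (\<lambda>xs. if P xs then a xs else b xs)"
proof -
  have "(\<lambda>xs. if P xs then a xs else b xs) =
      (\<lambda>xs. (if P xs then 1 else 0) * a xs + (1 - (if P xs then 1 else 0)) * b xs)"
    by auto
  then show ?thesis
    using assms unfolding decidable_def
    by (simp only:) (intro computable_mult computable_diff computable_const computable_add)
qed

text \<open>A predicate \<open>P y xs\<close> with an extra argument \<open>y\<close> is decided on the argument list \<open>y # xs\<close>.\<close>

lemma computable_Least:
  assumes "decidable (\<lambda>ys. P (arg ys 0) (tl ys))" "\<And>xs. \<exists>y. P y xs"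
  shows "computable (\<lambda>xs. LEAST y. P y xs)"
proof -
  let ?g = "\<lambda>ys. 1 - (if P (arg ys 0) (tl ys) then (1::nat) else 0)"
  have "computable ?g"
    using assms(1) unfolding decidable_def by (intro computable_diff computable_const)
  moreover have "\<exists>n. ?g (n # xs) = 0" for xs
    using assms(2) by simp
  ultimately have "computable (\<lambda>xs. LEAST n. ?g (n # xs) = 0)"
    by (rule computable_minimization)
  moreover have "((1::nat) - (if P n xs then 1 else 0) = 0) \<longleftrightarrow> P n xs" for n xs
    by simp
  ultimately show ?thesis by (simp only: arg_Cons_0 list.sel(3))
qed

lemma ex_less_iff_Least_less: "(\<exists>y<b. Q y) \<longleftrightarrow> (LEAST y. Q y \<or> y = b) < (b::nat)"
proof
  assume "\<exists>y<b. Q y"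
  then obtain y where "y < b" "Q y" by auto
  then have "(LEAST y. Q y \<or> y = b) \<le> y" by (intro Least_le) auto
  then show "(LEAST y. Q y \<or> y = b) < b" using \<open>y < b\<close> by simp
next
  assume "(LEAST y. Q y \<or> y = b) < b"
  moreover have "Q (LEAST y. Q y \<or> y = b) \<or> (LEAST y. Q y \<or> y = b) = b"
    by (rule LeastI[of _ b]) simp
  ultimately show "\<exists>y<b. Q y" by auto
qed

lemma decidable_bounded_ex:
  assumes "decidable (\<lambda>ys. P (arg ys 0) (tl ys))" "computable g"
  shows "decidable (\<lambda>xs. \<exists>y<g xs. P y xs)"
proof -
  have "computable (\<lambda>xs. LEAST y. P y xs \<or> y = g xs)"
  proof (rule computable_Least)
    show "decidable (\<lambda>ys. P (arg ys 0) (tl ys) \<or> arg ys 0 = g (tl ys))"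
      by (intro decidable_disj assms(1) decidable_eq computable_arg computable_tl[OF assms(2)])
  qed blast
  then show ?thesis
    unfolding ex_less_iff_Least_less by (rule decidable_less[OF _ assms(2)])
qed

lemma decidable_bounded_all:
  assumes "decidable (\<lambda>ys. P (arg ys 0) (tl ys))" "computable g"
  shows "decidable (\<lambda>xs. \<forall>y<g xs. P y xs)"
  using decidable_not[OF decidable_bounded_ex[where P="\<lambda>y xs. \<not> P y xs",
      OF decidable_not[OF assms(1)] assms(2)]]
  by simp

lemma computable_arg_tl1: "computable (\<lambda>xs. arg (tl xs) k)"
  by (simp add: arg_tl computable_arg)

lemma computable_arg_tl2: "computable (\<lambda>xs. arg (tl (tl xs)) k)"
  by (simp add: arg_tl computable_arg)

lemma computable_arg_tl3: "computable (\<lambda>xs. arg (tl (tl (tl xs))) k)"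
  by (simp add: arg_tl computable_arg)

lemma computable_arg_tl4: "computable (\<lambda>xs. arg (tl (tl (tl (tl xs)))) k)"
  by (simp add: arg_tl computable_arg)

lemma less_mult_Suc_div: "b \<noteq> 0 \<Longrightarrow> (a::nat) < b * Suc (a div b)"
  using div_less_iff_less_mult[of b a "Suc (a div b)"] by (simp add: mult.commute)

lemma div_eq_Least: "(a::nat) div b = (LEAST q. a < b * Suc q \<or> b = 0)"
proof (cases "b = 0")
  case False
  show ?thesis
  proof (rule Least_equality[symmetric])
    show "a < b * Suc (a div b) \<or> b = 0" using False less_mult_Suc_div by simp
    fix q assume "a < b * Suc q \<or> b = 0"
    with False have "a div b < Suc q"
      using div_less_iff_less_mult[of b a "Suc q"] by (simp add: mult.commute)
    then show "a div b \<le> q" by simp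
  qed
qed simp

lemma computable_div:
  assumes "computable g1" "computable g2"
  shows "computable (\<lambda>xs. g1 xs div g2 xs)"
proof -
  have "computable (\<lambda>xs. LEAST q. g1 xs < g2 xs * Suc q \<or> g2 xs = 0)"
  proof (rule computable_Least)
    show "decidable (\<lambda>ys. g1 (tl ys) < g2 (tl ys) * Suc (arg ys 0) \<or> g2 (tl ys) = 0)"
      by (intro decidable_disj decidable_less decidable_eq computable_mult computable_Suc
          computable_arg computable_const computable_tl assms)
  qed (use less_mult_Suc_div in blast)
  then show ?thesis by (simp only: div_eq_Least)
qed

lemma computable_mod:
  assumes "computable g1" "computable g2"
  shows "computable (\<lambda>xs. g1 xs mod g2 xs)"
proof -
  have "(\<lambda>xs. g1 xs mod g2 xs) = (\<lambda>xs. g1 xs - g2 xs * (g1 xs div g2 xs))"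
    by (simp add: minus_mult_div_eq_mod)
  then show ?thesis
    using assms by (auto intro!: computable_diff computable_mult computable_div)
qed

lemmas computable_intros = computable_arg computable_const computable_Suc computable_add
  computable_mult computable_diff computable_power computable_div computable_mod computable_If
  computable_arg_tl1 computable_arg_tl2 computable_arg_tl3 computable_arg_tl4
  decidable_eq decidable_less decidable_le decidable_not decidable_conj decidable_disj decidable_imp
  decidable_const decidable_bounded_ex decidable_bounded_all

section \<open>Codes of pairs and lists\<close>

lemma prod_encode_arith: "prod_encode (a, b) = (a + b) * Suc (a + b) div 2 + a"
  by (simp add: prod_encode_def triangle_def)

lemma prod_encode_mono: "a \<le> a' \<Longrightarrow> b \<le> b' \<Longrightarrow> prod_encode (a, b) \<le> prod_encode (a', b')"
  unfolding prod_encode_arith by (intro add_mono div_le_mono mult_le_mono) auto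

lemma computable_prod_encode:
  assumes "computable g1" "computable g2"
  shows "computable (\<lambda>xs. prod_encode (g1 xs, g2 xs))"
  unfolding prod_encode_arith by (intro computable_intros assms)

lemma ex_prod_decode_bounded: "\<exists>a b. a < Suc n \<and> b < Suc n \<and> (a + b) * Suc (a + b) div 2 + a = n"
proof -
  obtain a b where "prod_decode n = (a, b)" by fastforce
  then have "prod_encode (a, b) = n" by (metis prod_decode_inverse)
  moreover have "a \<le> prod_encode (a, b)" "b \<le> prod_encode (a, b)"
    by (rule le_prod_encode_1 le_prod_encode_2)+
  ultimately show ?thesis
    unfolding prod_encode_arith by (metis less_Suc_eq_le)
qed

lemma fst_prod_decode_eq_Least:
  "fst (prod_decode n) = (LEAST a. \<exists>b<Suc n. (a + b) * Suc (a + b) div 2 + a = n)"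
proof (rule Least_equality[symmetric])
  obtain a b where ab: "prod_decode n = (a, b)" by fastforce
  then have "prod_encode (a, b) = n" by (metis prod_decode_inverse)
  then show "\<exists>b<Suc n.
      (fst (prod_decode n) + b) * Suc (fst (prod_decode n) + b) div 2 + fst (prod_decode n) = n"
    using ab le_prod_encode_2[of b a] by (auto simp: prod_encode_arith intro!: exI[of _ b])
next
  fix a assume "\<exists>b<Suc n. (a + b) * Suc (a + b) div 2 + a = n"
  then obtain b where "prod_encode (a, b) = n" by (auto simp: prod_encode_arith)
  then show "fst (prod_decode n) \<le> a" by auto
qed

lemma snd_prod_decode_eq_Least:
  "snd (prod_decode n) = (LEAST b. \<exists>a<Suc n. (a + b) * Suc (a + b) div 2 + a = n)"
proof (rule Least_equality[symmetric])
  obtain a b where ab: "prod_decode n = (a, b)" by fastforce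
  then have "prod_encode (a, b) = n" by (metis prod_decode_inverse)
  then show "\<exists>a<Suc n. (a + snd (prod_decode n)) * Suc (a + snd (prod_decode n)) div 2 + a = n"
    using ab le_prod_encode_1[of a b] by (auto simp: prod_encode_arith intro!: exI[of _ a])
next
  fix b assume "\<exists>a<Suc n. (a + b) * Suc (a + b) div 2 + a = n"
  then obtain a where "prod_encode (a, b) = n" by (auto simp: prod_encode_arith)
  then show "snd (prod_decode n) \<le> b" by auto
qed

lemma computable_fst_prod_decode:
  assumes "computable g"
  shows "computable (\<lambda>xs. fst (prod_decode (g xs)))"
proof -
  have "computable (\<lambda>xs. LEAST a. \<exists>b<Suc (arg xs 0). (a + b) * Suc (a + b) div 2 + a = arg xs 0)"
    by (rule computable_Least, intro computable_intros) (use ex_prod_decode_bounded in blast)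
  then have "computable (\<lambda>xs. fst (prod_decode (arg xs 0)))"
    by (simp only: fst_prod_decode_eq_Least)
  then show ?thesis
    by (rule computable_comp1[where F="\<lambda>n. fst (prod_decode n)", OF _ assms])
qed

lemma computable_snd_prod_decode:
  assumes "computable g"
  shows "computable (\<lambda>xs. snd (prod_decode (g xs)))"
proof -
  have "computable (\<lambda>xs. LEAST b. \<exists>a<Suc (arg xs 0). (a + b) * Suc (a + b) div 2 + a = arg xs 0)"
    by (rule computable_Least, intro computable_intros) (use ex_prod_decode_bounded in blast)
  then have "computable (\<lambda>xs. snd (prod_decode (arg xs 0)))"
    by (simp only: snd_prod_decode_eq_Least)
  then show ?thesis
    by (rule computable_comp1[where F="\<lambda>n. snd (prod_decode n)", OF _ assms])
qed

text \<open>Operations on list codes, where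
  \<open>list_encode (x # xs) = Suc (prod_encode (x, list_encode xs))\<close>.\<close>

definition code_tl :: "nat \<Rightarrow> nat" where
  "code_tl c = snd (prod_decode (c - 1))"

definition code_hd :: "nat \<Rightarrow> nat" where
  "code_hd c = fst (prod_decode (c - 1))"

definition code_drop :: "nat \<Rightarrow> nat \<Rightarrow> nat" where
  "code_drop k c = rec_nat c (\<lambda>n r. code_tl r) k"

definition code_nth :: "nat \<Rightarrow> nat \<Rightarrow> nat" where
  "code_nth c k = code_hd (code_drop k c)"

definition code_length :: "nat \<Rightarrow> nat" where
  "code_length c = length (list_decode c)"

lemma computable_code_tl: "computable g \<Longrightarrow> computable (\<lambda>xs. code_tl (g xs))"
  unfolding code_tl_def by (intro computable_snd_prod_decode computable_intros)

lemma computable_code_hd: "computable g \<Longrightarrow> computable (\<lambda>xs. code_hd (g xs))"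
  unfolding code_hd_def by (intro computable_fst_prod_decode computable_intros)

lemma computable_code_drop:
  assumes "computable g1" "computable g2"
  shows "computable (\<lambda>xs. code_drop (g1 xs) (g2 xs))"
  unfolding code_drop_def
  using computable_rec_nat[of "\<lambda>y. y" "\<lambda>n r y. code_tl r", OF computable_arg
      computable_code_tl[OF computable_arg] assms]
  by simp

lemma computable_code_nth:
  assumes "computable g1" "computable g2"
  shows "computable (\<lambda>xs. code_nth (g1 xs) (g2 xs))"
  unfolding code_nth_def by (intro computable_code_hd computable_code_drop assms)

lemma prod_decode_0: "prod_decode 0 = (0, 0)"
  by (simp add: prod_decode_def prod_decode_aux.simps)

lemma list_decode_code_tl: "list_decode (code_tl c) = tl (list_decode c)"
  by (cases c) (simp_all add: code_tl_def prod_decode_0 split: prod.split)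

lemma list_decode_code_drop: "list_decode (code_drop k c) = drop k (list_decode c)"
  by (induction k) (simp_all add: code_drop_def list_decode_code_tl drop_Suc tl_drop)

lemma list_decode_eq_Nil: "list_decode x = [] \<longleftrightarrow> x = 0"
  by (cases x) (auto split: prod.split)

lemma code_nth_list_decode:
  assumes "k < length (list_decode c)"
  shows "code_nth c k = list_decode c ! k"
proof -
  have "list_decode (code_drop k c) = list_decode c ! k # drop (Suc k) (list_decode c)"
    using assms by (simp add: list_decode_code_drop Cons_nth_drop_Suc)
  moreover obtain n where n: "code_drop k c = Suc n"
    using calculation list_decode_eq_Nil by (cases "code_drop k c") auto
  ultimately show ?thesis
    by (simp add: code_nth_def code_hd_def split: prod.splits)
qed

lemma code_drop_code_length: "code_drop (code_length c) c = 0"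
  by (simp add: list_decode_eq_Nil[symmetric] list_decode_code_drop code_length_def)

lemma code_length_eq_Least: "code_length c = (LEAST k. code_drop k c = 0)"
proof (rule Least_equality[symmetric])
  show "code_drop (code_length c) c = 0" by (rule code_drop_code_length)
next
  fix k assume "code_drop k c = 0"
  then have "drop k (list_decode c) = []" by (metis list_decode_code_drop list_decode_eq_Nil)
  then show "code_length c \<le> k" by (simp add: code_length_def)
qed

lemma computable_code_length:
  assumes "computable g"
  shows "computable (\<lambda>xs. code_length (g xs))"
proof -
  have "computable (\<lambda>xs. LEAST k. code_drop k (arg xs 0) = 0)"
    by (rule computable_Least, intro computable_intros computable_code_drop)
      (use code_drop_code_length in blast)
  then have "computable (\<lambda>xs. code_length (arg xs 0))"
    by (simp only: code_length_eq_Least)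
  then show ?thesis
    by (rule computable_comp1[where F="code_length", OF _ assms])
qed

lemma length_le_list_encode: "length xs \<le> list_encode xs"
  by (induction xs) (auto intro: le_trans[OF _ le_prod_encode_2])

lemma list_encode_le_replicate:
  "\<forall>a\<in>set xs. a \<le> M \<Longrightarrow> list_encode xs \<le> list_encode (replicate (length xs) M)"
  by (induction xs) (auto intro: prod_encode_mono)

definition code_bound :: "nat \<Rightarrow> nat \<Rightarrow> nat" where
  "code_bound M n = Suc (list_encode (replicate n M))"

lemma list_encode_replicate_rec_nat:
  "list_encode (replicate n M) = rec_nat 0 (\<lambda>k r. Suc (prod_encode (M, r))) n"
  by (induction n) auto

lemma computable_code_bound:
  assumes "computable g"
  shows "computable (\<lambda>xs. code_bound M (g xs))"
proof -
  have "computable (\<lambda>xs. rec_nat 0 (\<lambda>n r. Suc (prod_encode (M, r))) (g xs))"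
    using computable_rec_nat[of "\<lambda>y. 0" "\<lambda>n r y. Suc (prod_encode (M, r))", OF computable_const
        computable_Suc[OF computable_prod_encode[OF computable_const computable_arg]] assms
        computable_const]
    by simp
  then show ?thesis
    unfolding code_bound_def list_encode_replicate_rec_nat by (rule computable_Suc)
qed

lemma mem_set_decode_less:
  assumes "y \<in> set_decode n"
  shows "y < n"
proof -
  from assms have "odd (n div 2 ^ y)" by (simp add: set_decode_def)
  then have "2 ^ y \<le> n" by (metis div_greater_zero_iff odd_pos)
  then show ?thesis using less_exp[of y] by linarith
qed

lemma decidable_mem_set_decode:
  assumes "computable g1" "computable g2"
  shows "decidable (\<lambda>xs. g1 xs \<in> set_decode (g2 xs))"
proof -
  have "(\<lambda>xs. g1 xs \<in> set_decode (g2 xs)) = (\<lambda>xs. g2 xs div 2 ^ g1 xs mod 2 = 1)"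
    by (auto simp: set_decode_def odd_iff_mod_2_eq_one)
  then show ?thesis
    by (simp only:) (intro computable_intros assms)
qed

lemma decidable_mem_finite:
  assumes "finite A" "computable g"
  shows "decidable (\<lambda>xs. g xs \<in> A)"
  using assms(1)
proof (induction A)
  case empty
  then show ?case by (simp add: decidable_const)
next
  case (insert a A)
  have "decidable (\<lambda>xs. g xs = a \<or> g xs \<in> A)"
    by (intro decidable_disj insert.IH computable_intros assms(2))
  then show ?case by simp
qed

lemma abs_le_int_encode: "\<bar>i\<bar> \<le> int (int_encode i)"
  by (auto simp: int_encode_def sum_encode_def)

definition sub_int_code :: "nat \<Rightarrow> nat \<Rightarrow> nat" where
  "sub_int_code M c = (if even c then M - c div 2 else M + c div 2 + 1)"

lemma sub_int_code_int_encode: "sub_int_code M (int_encode i) = nat (int M - i)"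
  by (auto simp: sub_int_code_def int_encode_def sum_encode_def)

lemma computable_sub_int_code:
  assumes "computable g1" "computable g2"
  shows "computable (\<lambda>xs. sub_int_code (g1 xs) (g2 xs))"
proof -
  have "(\<lambda>xs. sub_int_code (g1 xs) (g2 xs)) =
      (\<lambda>xs. if g2 xs mod 2 = 0 then g1 xs - g2 xs div 2 else g1 xs + g2 xs div 2 + 1)"
    by (auto simp: sub_int_code_def)
  then show ?thesis
    by (simp only:) (intro computable_intros assms)
qed

lemma length_le_word_code: "length w \<le> word_code e w"
  unfolding word_code_def using length_le_list_encode[of "map e w"] by simp

lemma word_code_eq_iff: "inj e \<Longrightarrow> word_code e x = word_code e y \<longleftrightarrow> x = y"
  unfolding word_code_def list_encode_eq by (simp add: inj_map_eq_map)

lemma code_length_word_code: "code_length (word_code e x) = length x"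
  by (simp add: code_length_def word_code_def)

lemma code_nth_word_code: "k < length x \<Longrightarrow> code_nth (word_code e x) k = e (x ! k)"
  by (simp add: code_nth_list_decode word_code_def)

definition occurs_at :: "'a list \<Rightarrow> nat \<Rightarrow> 'a list \<Rightarrow> bool" where
  "occurs_at x d u \<longleftrightarrow> d + length u \<le> length x \<and> (\<forall>t<length u. x ! (d + t) = u ! t)"

definition code_occurs_at :: "nat \<Rightarrow> nat \<Rightarrow> nat \<Rightarrow> bool" where
  "code_occurs_at c d u \<longleftrightarrow>
    d + code_length u \<le> code_length c \<and> (\<forall>t<code_length u. code_nth c (d + t) = code_nth u t)"

lemma code_occurs_at_word_code:
  "inj e \<Longrightarrow> code_occurs_at (word_code e x) d (word_code e u) \<longleftrightarrow> occurs_at x d u"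
  unfolding code_occurs_at_def occurs_at_def code_length_word_code
  by (auto simp: code_nth_word_code inj_eq)

lemma decidable_code_occurs_at:
  assumes "computable g1" "computable g2" "computable g3"
  shows "decidable (\<lambda>xs. code_occurs_at (g1 xs) (g2 xs) (g3 xs))"
proof -
  have "decidable (\<lambda>xs. code_occurs_at (arg xs 0) (arg xs 1) (arg xs 2))"
    unfolding code_occurs_at_def
    by (intro computable_intros computable_code_length computable_code_nth)
  then show ?thesis
    unfolding decidable_def
    by (rule computable_comp3[where F="\<lambda>a b c. if code_occurs_at a b c then 1 else 0", OF _ assms])
qed

definition is_word_code :: "('a \<Rightarrow> nat) \<Rightarrow> nat \<Rightarrow> bool" where
  "is_word_code e c \<longleftrightarrow> (\<forall>k<code_length c. code_nth c k \<in> range e)"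

lemma is_word_code_iff: "is_word_code e c \<longleftrightarrow> (\<exists>x. c = word_code e x)"
proof
  assume "is_word_code e c"
  then have "\<forall>a\<in>set (list_decode c). a \<in> range e"
    unfolding is_word_code_def code_length_def by (auto simp: in_set_conv_nth code_nth_list_decode)
  then have "map e (map (inv e) (list_decode c)) = list_decode c"
    unfolding map_map by (intro map_idI) (auto simp: f_inv_into_f)
  then have "c = word_code e (map (inv e) (list_decode c))"
    by (simp add: word_code_def)
  then show "\<exists>x. c = word_code e x" ..
next
  assume "\<exists>x. c = word_code e x"
  then show "is_word_code e c"
    unfolding is_word_code_def by (auto simp: code_length_word_code code_nth_word_code)
qed

lemma decidable_is_word_code:
  assumes "finite (range e)" "computable g"
  shows "decidable (\<lambda>xs. is_word_code e (g xs))"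
proof -
  have "decidable (\<lambda>xs. is_word_code e (arg xs 0))"
    unfolding is_word_code_def
    by (intro decidable_bounded_all decidable_mem_finite assms(1) computable_code_nth
        computable_code_length computable_intros)
  then show ?thesis
    unfolding decidable_def
    by (rule computable_comp1[where F="\<lambda>a. if is_word_code e a then 1 else 0", OF _ assms(2)])
qed

definition in_lang_code :: "('a \<Rightarrow> nat) \<Rightarrow> 'a list set \<Rightarrow> nat \<Rightarrow> bool" where
  "in_lang_code e L c \<longleftrightarrow> (\<exists>x. c = word_code e x \<and> x \<in> L)"

lemma in_lang_code_word_code: "inj e \<Longrightarrow> in_lang_code e L (word_code e x) \<longleftrightarrow> x \<in> L"
  unfolding in_lang_code_def by (simp add: word_code_eq_iff)

text \<open>The decider of \<open>L\<close> is only trusted on codes of words, so any other input is first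
  replaced by the code \<open>0\<close> of the empty word.\<close>

lemma decidable_in_lang_code:
  assumes inj: "inj e" and fin: "finite (range e)"
    and L: "decides f {[word_code e w] | w. True} (\<lambda>xs. \<exists>w. xs = [word_code e w] \<and> w \<in> L)"
    and "computable g"
  shows "decidable (\<lambda>xs. in_lang_code e L (g xs))"
proof -
  define san where "san c = (if is_word_code e c then c else 0)" for c
  define R where "R y = (if \<exists>w. [y] = [word_code e w] \<and> w \<in> L then 1 else (0::nat))" for y
  have san_computable: "computable (\<lambda>xs. san (arg xs 0))"
    unfolding san_def by (intro computable_If decidable_is_word_code fin computable_intros)
  have san: "\<exists>x. san c = word_code e x" for c
    unfolding san_def using is_word_code_iff[of e c]
    by (auto intro: exI[of _ "[]"] simp: word_code_def)
  have eval_san: "eval f [san (arg xs 0)] (R (san (arg xs 0)))" for xs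
  proof -
    obtain x where x: "san (arg xs 0) = word_code e x"
      using san by blast
    have "[word_code e x] \<in> {[word_code e w] | w. True}" by blast
    from L[unfolded decides_def, rule_format, OF this] show ?thesis
      unfolding x R_def by simp
  qed
  have "computable (\<lambda>xs. R (san (arg xs 0)))"
    by (rule computable_comp_partial[OF san_computable eval_san])
  then have "computable (\<lambda>xs. if is_word_code e (arg xs 0) then R (san (arg xs 0)) else 0)"
    by (intro computable_If decidable_is_word_code fin computable_intros)
  moreover have "(if is_word_code e c then R (san c) else 0) = (if in_lang_code e L c then 1 else 0)"
    for c
    unfolding in_lang_code_def R_def san_def using is_word_code_iff[of e c]
    by (auto simp: word_code_eq_iff[OF inj])
  ultimately have "decidable (\<lambda>xs. in_lang_code e L (arg xs 0))"
    unfolding decidable_def by simp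
  then show ?thesis
    unfolding decidable_def
    by (rule computable_comp1[where F="\<lambda>a. if in_lang_code e L a then 1 else 0", OF _ \<open>computable g\<close>])
qed

text \<open>Codes of words of length \<open>n\<close> lie below \<open>code_bound (Max (range e)) n\<close>, so this
  quantifier over the words of \<open>L\<close> of length \<open>n\<close> is bounded.\<close>

definition all_lang_codes :: "('a \<Rightarrow> nat) \<Rightarrow> 'a list set \<Rightarrow> nat \<Rightarrow> (nat \<Rightarrow> bool) \<Rightarrow> bool" where
  "all_lang_codes e L n \<Phi> \<longleftrightarrow>
     (\<forall>c<code_bound (Max (range e)) n. code_length c = n \<and> in_lang_code e L c \<longrightarrow> \<Phi> c)"

lemma all_lang_codes_iff:
  assumes "inj e" "finite (range e)"
  shows "all_lang_codes e L n \<Phi> \<longleftrightarrow> (\<forall>x\<in>L. length x = n \<longrightarrow> \<Phi> (word_code e x))"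
proof
  assume all: "all_lang_codes e L n \<Phi>"
  show "\<forall>x\<in>L. length x = n \<longrightarrow> \<Phi> (word_code e x)"
  proof (intro ballI impI)
    fix x assume x: "x \<in> L" "length x = n"
    have "\<forall>a\<in>set (map e x). a \<le> Max (range e)"
      using assms(2) by auto
    from list_encode_le_replicate[OF this] have "word_code e x < code_bound (Max (range e)) n"
      unfolding code_bound_def word_code_def using x(2) by simp
    with all x show "\<Phi> (word_code e x)"
      by (simp add: all_lang_codes_def code_length_word_code in_lang_code_word_code[OF assms(1)])
  qed
next
  assume "\<forall>x\<in>L. length x = n \<longrightarrow> \<Phi> (word_code e x)"
  then show "all_lang_codes e L n \<Phi>"
    by (auto simp: all_lang_codes_def in_lang_code_def code_length_word_code)
qed

lemma decidable_all_lang_codes: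
  assumes "inj e" "finite (range e)"
    and "decides f {[word_code e w] | w. True} (\<lambda>xs. \<exists>w. xs = [word_code e w] \<and> w \<in> L)"
    and "computable n" "decidable (\<lambda>ys. \<Phi> (arg ys 0) (tl ys))"
  shows "decidable (\<lambda>xs. all_lang_codes e L (n xs) (\<lambda>c. \<Phi> c xs))"
  unfolding all_lang_codes_def
  by (intro decidable_bounded_all decidable_imp decidable_conj decidable_eq
      decidable_in_lang_code[OF assms(1-3)] computable_code_bound computable_code_length
      computable_tl computable_arg assms(4,5))

lemma inj_pair_code: "inj e \<Longrightarrow> inj (pair_code e)"
  by (intro injI) (auto simp: pair_code_def word_code_eq_iff int_encode_eq prod_eq_iff)

lemma prod_decode_pair_code:
  "prod_decode (pair_code e p) = (word_code e (fst p), int_encode (snd p))"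
  by (simp add: pair_code_def)

lemma set_decode_fset_code: "finite S \<Longrightarrow> set_decode (fset_code e S) = pair_code e ` S"
  by (simp add: fset_code_def)

lemma pair_code_less_fset_code: "finite S \<Longrightarrow> p \<in> S \<Longrightarrow> pair_code e p < fset_code e S"
  using mem_set_decode_less[of "pair_code e p" "fset_code e S"] by (simp add: set_decode_fset_code)

lemma fset_code_bounds:
  assumes "finite S" "p \<in> S"
  shows "length (fst p) < fset_code e S" "\<bar>snd p\<bar> < int (fset_code e S)"
proof -
  have "length (fst p) \<le> pair_code e p" "\<bar>snd p\<bar> \<le> int (pair_code e p)"
    unfolding pair_code_def
    using length_le_word_code[of "fst p" e] le_prod_encode_1[of "word_code e (fst p)" "int_encode (snd p)"]
      abs_le_int_encode[of "snd p"] le_prod_encode_2[of "int_encode (snd p)" "word_code e (fst p)"]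
    by linarith+
  moreover have "pair_code e p < fset_code e S" by (rule pair_code_less_fset_code[OF assms])
  ultimately show "length (fst p) < fset_code e S" "\<bar>snd p\<bar> < int (fset_code e S)"
    by linarith+
qed

lemma fset_code_eq_iff:
  assumes "inj e" "finite S" "finite S'"
  shows "fset_code e S = fset_code e S' \<longleftrightarrow> S = S'"
  using assms inj_pair_code[OF assms(1)] set_encode_eq[of "pair_code e ` S" "pair_code e ` S'"]
  by (auto simp: fset_code_def inj_image_eq_iff)

lemma ball_set_decode_fset_code:
  "finite S \<Longrightarrow> (\<forall>y<fset_code e S. y \<in> set_decode (fset_code e S) \<longrightarrow> Q y) \<longleftrightarrow> (\<forall>p\<in>S. Q (pair_code e p))"
  by (auto simp: set_decode_fset_code pair_code_less_fset_code)

lemma bex_set_decode_fset_code: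
  "finite S \<Longrightarrow> (\<exists>y<fset_code e S. y \<in> set_decode (fset_code e S) \<and> Q y) \<longleftrightarrow> (\<exists>p\<in>S. Q (pair_code e p))"
  by (simp add: set_decode_fset_code) (blast intro: pair_code_less_fset_code)

lemma ball2_set_decode_fset_code:
  assumes "finite S" "inj e"
  shows "(\<forall>y<fset_code e S. \<forall>z<fset_code e S.
            y \<in> set_decode (fset_code e S) \<and> z \<in> set_decode (fset_code e S) \<and> y \<noteq> z \<longrightarrow> R y z)
     \<longleftrightarrow> (\<forall>p\<in>S. \<forall>q\<in>S. p \<noteq> q \<longrightarrow> R (pair_code e p) (pair_code e q))"
proof -
  have "p \<noteq> q \<longleftrightarrow> pair_code e p \<noteq> pair_code e q" for p q
    using inj_pair_code[OF assms(2)] by (auto dest: injD)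
  then show ?thesis
    by (auto simp: set_decode_fset_code[OF assms(1)] pair_code_less_fset_code[OF assms(1)])
qed

lemma decides_if_decidable:
  assumes "decidable Q" "\<And>xs. xs \<in> D \<Longrightarrow> Q xs \<longleftrightarrow> P xs"
  shows "\<exists>f. decides f D P"
proof -
  from assms(1) obtain f where "\<forall>xs. eval f xs (if Q xs then 1 else 0)"
    unfolding decidable_def computable_def by auto
  then have "decides f D P" unfolding decides_def using assms(2) by (metis (full_types))
  then show ?thesis by blast
qed

lemma ex_decides_mono: "\<exists>f. decides f D P \<Longrightarrow> D' \<subseteq> D \<Longrightarrow> \<exists>f. decides f D' P"
  unfolding decides_def by blast

lemma decides_on_quadruple_codes:
  assumes "inj e" "decidable Q"
    and "\<And>w v i j. Q [word_code e w, word_code e v, int_encode i, int_encode j] \<longleftrightarrow> R w v i j"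
  shows "\<exists>f. decides f {[word_code e w, word_code e v, int_encode i, int_encode j] | w v i j. True}
    (\<lambda>xs. \<exists>w v i j. xs = [word_code e w, word_code e v, int_encode i, int_encode j]
        \<and> R w v i j)"
  using assms(3)
  by (auto intro!: decides_if_decidable[OF assms(2)] simp: word_code_eq_iff[OF assms(1)] int_encode_eq)

lemma decides_on_fset_codes:
  assumes "inj e" "decidable Q"
    and "\<And>S. finite S \<Longrightarrow> F S \<Longrightarrow> Q [fset_code e S] \<longleftrightarrow> R S"
  shows "\<exists>f. decides f {[fset_code e S] | S. finite S \<and> F S}
    (\<lambda>xs. \<exists>S. xs = [fset_code e S] \<and> finite S \<and> F S \<and> R S)"
  using assms(3)
  by (auto intro!: decides_if_decidable[OF assms(2)] simp: fset_code_eq_iff[OF assms(1)])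

section \<open>Windows of a shift-invariant set\<close>

lemma shift_translate_mem:
  assumes shift_inv: "T ` \<Omega> = \<Omega>" and "\<omega> \<in> \<Omega>"
  shows "(\<lambda>m. \<omega> (m + z)) \<in> \<Omega>"
proof (induction z rule: int_induct[where k=0])
  case base
  then show ?case using \<open>\<omega> \<in> \<Omega>\<close> by simp
next
  case (step1 z)
  then have "T (\<lambda>m. \<omega> (m + z)) \<in> \<Omega>" using shift_inv by blast
  then show ?case by (simp add: shift_def ac_simps)
next
  case (step2 z)
  then obtain \<omega>' where "\<omega>' \<in> \<Omega>" and \<omega>': "(\<lambda>m. \<omega> (m + z)) = T \<omega>'" using shift_inv by (metis imageE)
  have "(\<lambda>m. \<omega> (m + (z - 1))) = \<omega>'"
  proof
    show "\<omega> (m + (z - 1)) = \<omega>' m" for m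
      using fun_cong[OF \<omega>', of "m - 1"] by (simp add: shift_def algebra_simps)
  qed
  then show ?case using \<open>\<omega>' \<in> \<Omega>\<close> by simp
qed

definition window :: "(int \<Rightarrow> 'a) \<Rightarrow> int \<Rightarrow> nat \<Rightarrow> 'a list" where
  "window \<omega> P n = map (\<lambda>t. \<omega> (P + int t)) [0..<n]"

lemma window_in_Lang:
  assumes "\<omega> \<in> \<Omega>" "0 < n"
  shows "window \<omega> P n \<in> Lang \<Omega>"
proof -
  have "window \<omega> P n \<in> Lm \<Omega> n"
    unfolding Lm_def window_def using assms(1) by (intro CollectI conjI bexI[of _ \<omega>] exI[of _ P]) auto
  then show ?thesis using assms(2) unfolding Lang_def by auto
qed

lemma Lang_eq_window:
  assumes "T ` \<Omega> = \<Omega>" "x \<in> Lang \<Omega>"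
  shows "\<exists>\<omega>\<in>\<Omega>. window \<omega> P (length x) = x"
proof -
  from assms(2) obtain \<omega> k where "\<omega> \<in> \<Omega>" and \<omega>: "\<forall>i<length x. \<omega> (k + int i) = x ! i"
    unfolding Lang_def Lm_def by auto
  have "(\<lambda>m. \<omega> (m + (k - P))) \<in> \<Omega>" by (rule shift_translate_mem[OF assms(1) \<open>\<omega> \<in> \<Omega>\<close>])
  moreover have "window (\<lambda>m. \<omega> (m + (k - P))) P (length x) = x"
    unfolding window_def using \<omega> by (auto intro!: nth_equalityI simp: algebra_simps)
  ultimately show ?thesis by blast
qed

lemma ball_window_iff_ball_Lang:
  assumes "T ` \<Omega> = \<Omega>" "0 < n"
  shows "(\<forall>\<omega>\<in>\<Omega>. \<Phi> (window \<omega> P n)) \<longleftrightarrow> (\<forall>x\<in>Lang \<Omega>. length x = n \<longrightarrow> \<Phi> x)"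
  using window_in_Lang[OF _ assms(2)] Lang_eq_window[OF assms(1), of _ P]
  by (fastforce simp: window_def)

lemma mem_cyl_iff_occurs_at_window:
  assumes "\<bar>i\<bar> + int (length u) \<le> int K"
  shows "\<omega> \<in> cyl \<Omega> u i \<longleftrightarrow> \<omega> \<in> \<Omega> \<and> occurs_at (window \<omega> (- int K) (2 * K)) (nat (int K - i)) u"
proof -
  have "nat (int K - i) + length u \<le> 2 * K" using assms by linarith
  moreover have "- int K + int (nat (int K - i) + t) = int t - i" for t using assms by simp
  ultimately show ?thesis unfolding cyl_def occurs_at_def window_def by auto
qed

lemma image_shift_cyl:
  assumes "T ` \<Omega> = \<Omega>"
  shows "T ` cyl \<Omega> w i = cyl \<Omega> w (i + 1)"
proof
  show "T ` cyl \<Omega> w i \<subseteq> cyl \<Omega> w (i + 1)"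
    using assms unfolding cyl_def shift_def by (auto simp: algebra_simps)
next
  show "cyl \<Omega> w (i + 1) \<subseteq> T ` cyl \<Omega> w i"
  proof
    fix \<omega> assume \<omega>: "\<omega> \<in> cyl \<Omega> w (i + 1)"
    let ?\<omega> = "\<lambda>m. \<omega> (m + - 1)"
    have "?\<omega> \<in> cyl \<Omega> w i"
      using shift_translate_mem[OF assms, of \<omega> "-1"] \<omega> unfolding cyl_def by (auto simp: algebra_simps)
    moreover have "\<omega> = T ?\<omega>" by (simp add: shift_def)
    ultimately show "\<omega> \<in> T ` cyl \<Omega> w i" by blast
  qed
qed

lemma three_disjoint_cyl_iff:
  assumes "T ` \<Omega> = \<Omega>"
  shows "three_disjoint (cyl \<Omega> w i) (cyl \<Omega> v j) \<longleftrightarrow>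
     (\<forall>\<omega>\<in>\<Omega>. \<forall>a<3. \<forall>b<3. \<not> (\<omega> \<in> cyl \<Omega> w (i + int a) \<and> \<omega> \<in> cyl \<Omega> v (j + int b)))"
proof -
  have orbit: "cyl \<Omega> u k \<union> T ` cyl \<Omega> u k \<union> T ` T ` cyl \<Omega> u k = (\<Union>a<3. cyl \<Omega> u (k + int a))" for u k
  proof -
    have "{..<3::nat} = {0, 1, 2}" by auto
    then show ?thesis by (simp add: image_shift_cyl[OF assms] add.assoc Un_ac)
  qed
  have "cyl \<Omega> u k \<subseteq> \<Omega>" for u k by (auto simp: cyl_def)
  then show ?thesis unfolding three_disjoint_def orbit by blast
qed

lemma cyl_subset_iff_Lang:
  assumes shift_inv: "T ` \<Omega> = \<Omega>"
    and w: "\<bar>i\<bar> + int (length w) < int K" and v: "\<bar>j\<bar> + int (length v) < int K"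
  shows "cyl \<Omega> v j \<subseteq> cyl \<Omega> w i \<longleftrightarrow>
    (\<forall>x\<in>Lang \<Omega>. length x = 2 * K \<longrightarrow>
       occurs_at x (nat (int K - j)) v \<longrightarrow> occurs_at x (nat (int K - i)) w)"
proof -
  have "cyl \<Omega> v j \<subseteq> cyl \<Omega> w i \<longleftrightarrow>
      (\<forall>\<omega>\<in>\<Omega>. (\<lambda>x. occurs_at x (nat (int K - j)) v \<longrightarrow> occurs_at x (nat (int K - i)) w)
               (window \<omega> (- int K) (2 * K)))"
    using mem_cyl_iff_occurs_at_window[of i w K] mem_cyl_iff_occurs_at_window[of j v K] w v
    by (auto simp: subset_iff)
  also have "\<dots> \<longleftrightarrow> (\<forall>x\<in>Lang \<Omega>. length x = 2 * K \<longrightarrow>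
       occurs_at x (nat (int K - j)) v \<longrightarrow> occurs_at x (nat (int K - i)) w)"
    by (rule ball_window_iff_ball_Lang[OF shift_inv]) (use w in linarith)
  finally show ?thesis .
qed

lemma three_disjoint_cyl_iff_Lang:
  assumes shift_inv: "T ` \<Omega> = \<Omega>"
    and w: "\<bar>i\<bar> + int (length w) + 2 < int K" and v: "\<bar>j\<bar> + int (length v) + 2 < int K"
  shows "three_disjoint (cyl \<Omega> w i) (cyl \<Omega> v j) \<longleftrightarrow>
    (\<forall>x\<in>Lang \<Omega>. length x = 2 * K \<longrightarrow> (\<forall>a<3. \<forall>b<3.
       \<not> (occurs_at x (nat (int K - i) - a) w \<and> occurs_at x (nat (int K - j) - b) v)))"
proof -
  have shifted: "\<omega> \<in> cyl \<Omega> u (k + int a) \<longleftrightarrow>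
      \<omega> \<in> \<Omega> \<and> occurs_at (window \<omega> (- int K) (2 * K)) (nat (int K - k) - a) u"
    if "\<bar>k\<bar> + int (length u) + 2 < int K" "a < 3" for \<omega> u k a
  proof -
    have "nat (int K - (k + int a)) = nat (int K - k) - a" using that by linarith
    moreover have "\<bar>k + int a\<bar> + int (length u) \<le> int K" using that by linarith
    ultimately show ?thesis using mem_cyl_iff_occurs_at_window by metis
  qed
  have "three_disjoint (cyl \<Omega> w i) (cyl \<Omega> v j) \<longleftrightarrow>
      (\<forall>\<omega>\<in>\<Omega>. (\<lambda>x. \<forall>a<3. \<forall>b<3.
         \<not> (occurs_at x (nat (int K - i) - a) w \<and> occurs_at x (nat (int K - j) - b) v))
       (window \<omega> (- int K) (2 * K)))"
    unfolding three_disjoint_cyl_iff[OF shift_inv] using shifted w v by auto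
  also have "\<dots> \<longleftrightarrow> (\<forall>x\<in>Lang \<Omega>. length x = 2 * K \<longrightarrow> (\<forall>a<3. \<forall>b<3.
       \<not> (occurs_at x (nat (int K - i) - a) w \<and> occurs_at x (nat (int K - j) - b) v)))"
    by (rule ball_window_iff_ball_Lang[OF shift_inv]) (use w in linarith)
  finally show ?thesis .
qed

lemma disjoint_family_Union_eq_iff:
  assumes "\<And>p. C p \<subseteq> \<Omega>" "D \<subseteq> \<Omega>"
  shows "disjoint_family_on C S \<and> (\<Union>p\<in>S. C p) = D \<longleftrightarrow>
     (\<forall>\<omega>\<in>\<Omega>. (\<forall>p\<in>S. \<forall>q\<in>S. p \<noteq> q \<longrightarrow> \<not> (\<omega> \<in> C p \<and> \<omega> \<in> C q)) \<and>
        (\<forall>p\<in>S. \<omega> \<in> C p \<longrightarrow> \<omega> \<in> D) \<and> (\<omega> \<in> D \<longrightarrow> (\<exists>p\<in>S. \<omega> \<in> C p)))"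
proof -
  have "disjoint_family_on C S \<longleftrightarrow> (\<forall>\<omega>\<in>\<Omega>. \<forall>p\<in>S. \<forall>q\<in>S. p \<noteq> q \<longrightarrow> \<not> (\<omega> \<in> C p \<and> \<omega> \<in> C q))"
    using assms(1) unfolding disjoint_family_on_def by blast
  moreover have "(\<Union>p\<in>S. C p) = D \<longleftrightarrow>
      (\<forall>\<omega>\<in>\<Omega>. (\<forall>p\<in>S. \<omega> \<in> C p \<longrightarrow> \<omega> \<in> D) \<and> (\<omega> \<in> D \<longrightarrow> (\<exists>p\<in>S. \<omega> \<in> C p)))"
    using assms by (auto simp: set_eq_iff subset_iff)
  ultimately show ?thesis by (simp only: ball_conj_distrib)
qed

lemma cylinder_partition_iff_Lang:
  assumes shift_inv: "T ` \<Omega> = \<Omega>" and "finite S"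
    and w: "\<bar>i\<bar> + int (length w) < int K"
    and S: "\<forall>p\<in>S. \<bar>snd p\<bar> + int (length (fst p)) < int K"
  shows "cylinder_partition \<Omega> S w i \<longleftrightarrow> (\<forall>p\<in>S. fst p \<in> Lang \<Omega>) \<and>
    (\<forall>x\<in>Lang \<Omega>. length x = 2 * K \<longrightarrow>
       (\<forall>p\<in>S. \<forall>q\<in>S. p \<noteq> q \<longrightarrow>
          \<not> (occurs_at x (nat (int K - snd p)) (fst p) \<and> occurs_at x (nat (int K - snd q)) (fst q))) \<and>
       (\<forall>p\<in>S. occurs_at x (nat (int K - snd p)) (fst p) \<longrightarrow> occurs_at x (nat (int K - i)) w) \<and>
       (occurs_at x (nat (int K - i)) w \<longrightarrow> (\<exists>p\<in>S. occurs_at x (nat (int K - snd p)) (fst p))))"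
    (is "_ \<longleftrightarrow> _ \<and> (\<forall>x\<in>Lang \<Omega>. length x = 2 * K \<longrightarrow> ?\<Psi> x)")
proof -
  define C where "C p = cyl \<Omega> (fst p) (snd p)" for p :: "'a list \<times> int"
  have C: "\<omega> \<in> C p \<longleftrightarrow> \<omega> \<in> \<Omega> \<and> occurs_at (window \<omega> (- int K) (2 * K)) (nat (int K - snd p)) (fst p)"
    if "p \<in> S" for \<omega> p
    unfolding C_def using mem_cyl_iff_occurs_at_window S that by (metis less_imp_le)
  have sub: "C p \<subseteq> \<Omega>" "cyl \<Omega> w i \<subseteq> \<Omega>" for p by (auto simp: C_def cyl_def)
  have "disjoint_family_on C S \<and> (\<Union>p\<in>S. C p) = cyl \<Omega> w i \<longleftrightarrow> (\<forall>\<omega>\<in>\<Omega>. ?\<Psi> (window \<omega> (- int K) (2 * K)))"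
    unfolding disjoint_family_Union_eq_iff[OF sub]
    using C mem_cyl_iff_occurs_at_window[of i w K] w by auto
  also have "\<dots> \<longleftrightarrow> (\<forall>x\<in>Lang \<Omega>. length x = 2 * K \<longrightarrow> ?\<Psi> x)"
    by (rule ball_window_iff_ball_Lang[OF shift_inv]) (use w in linarith)
  finally show ?thesis
    unfolding cylinder_partition_def C_def using \<open>finite S\<close> by (simp add: case_prod_beta')
qed

lemma decidable_cyl_subset:
  fixes \<Omega> :: "(int \<Rightarrow> 'a::finite) set"
  assumes inj: "inj e" and shift_inv: "T ` \<Omega> = \<Omega>"
    and L: "decides f {[word_code e w] | w. True} (\<lambda>xs. \<exists>w. xs = [word_code e w] \<and> w \<in> Lang \<Omega>)"
  shows "\<exists>f. decides f {[word_code e w, word_code e v, int_encode i, int_encode j] | w v i j. True}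
    (\<lambda>xs. \<exists>w v i j. xs = [word_code e w, word_code e v, int_encode i, int_encode j]
        \<and> cyl \<Omega> v j \<subseteq> cyl \<Omega> w i)"
proof -
  \<comment> \<open>Codes dominate lengths and absolute values, so \<open>K\<close> exceeds every position involved.\<close>
  define K where "K xs = arg xs 0 + arg xs 1 + arg xs 2 + arg xs 3 + 1" for xs
  define Q where "Q xs \<longleftrightarrow> all_lang_codes e (Lang \<Omega>) (2 * K xs) (\<lambda>c.
      code_occurs_at c (sub_int_code (K xs) (arg xs 3)) (arg xs 1) \<longrightarrow>
      code_occurs_at c (sub_int_code (K xs) (arg xs 2)) (arg xs 0))" for xs
  have "decidable Q"
    unfolding Q_def K_def
    by (intro decidable_all_lang_codes[OF inj _ L] decidable_imp decidable_code_occurs_at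
        computable_sub_int_code computable_intros) simp
  moreover have "Q [word_code e w, word_code e v, int_encode i, int_encode j] \<longleftrightarrow> cyl \<Omega> v j \<subseteq> cyl \<Omega> w i"
    for w v i j
  proof -
    define K' where "K' = word_code e w + word_code e v + int_encode i + int_encode j + 1"
    have "\<bar>i\<bar> + int (length w) < int K'" "\<bar>j\<bar> + int (length v) < int K'"
      using abs_le_int_encode[of i] abs_le_int_encode[of j] length_le_word_code[of w e]
        length_le_word_code[of v e] unfolding K'_def by linarith+
    from cyl_subset_iff_Lang[OF shift_inv this] show ?thesis
      by (simp add: Q_def K_def K'_def arg_def numeral_eq_Suc all_lang_codes_iff[OF inj]
          code_occurs_at_word_code[OF inj] sub_int_code_int_encode)
  qed
  ultimately show ?thesis by (rule decides_on_quadruple_codes[OF inj])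
qed

lemma decidable_three_disjoint:
  fixes \<Omega> :: "(int \<Rightarrow> 'a::finite) set"
  assumes inj: "inj e" and shift_inv: "T ` \<Omega> = \<Omega>"
    and L: "decides f {[word_code e w] | w. True} (\<lambda>xs. \<exists>w. xs = [word_code e w] \<and> w \<in> Lang \<Omega>)"
  shows "\<exists>f. decides f {[word_code e w, word_code e v, int_encode i, int_encode j] | w v i j. True}
    (\<lambda>xs. \<exists>w v i j. xs = [word_code e w, word_code e v, int_encode i, int_encode j]
        \<and> three_disjoint (cyl \<Omega> w i) (cyl \<Omega> v j))"
proof -
  define K where "K xs = arg xs 0 + arg xs 1 + arg xs 2 + arg xs 3 + 3" for xs
  define Q where "Q xs \<longleftrightarrow> all_lang_codes e (Lang \<Omega>) (2 * K xs) (\<lambda>c. \<forall>a<3. \<forall>b<3.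
      \<not> (code_occurs_at c (sub_int_code (K xs) (arg xs 2) - a) (arg xs 0) \<and>
         code_occurs_at c (sub_int_code (K xs) (arg xs 3) - b) (arg xs 1)))" for xs
  have "decidable Q"
    unfolding Q_def K_def
    by (intro decidable_all_lang_codes[OF inj _ L] decidable_bounded_all decidable_not decidable_conj
        decidable_code_occurs_at computable_sub_int_code computable_intros) simp
  moreover have "Q [word_code e w, word_code e v, int_encode i, int_encode j] \<longleftrightarrow>
      three_disjoint (cyl \<Omega> w i) (cyl \<Omega> v j)" for w v i j
  proof -
    define K' where "K' = word_code e w + word_code e v + int_encode i + int_encode j + 3"
    have "\<bar>i\<bar> + int (length w) + 2 < int K'" "\<bar>j\<bar> + int (length v) + 2 < int K'"
      using abs_le_int_encode[of i] abs_le_int_encode[of j] length_le_word_code[of w e]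
        length_le_word_code[of v e] unfolding K'_def by linarith+
    from three_disjoint_cyl_iff_Lang[OF shift_inv this] show ?thesis
      by (simp add: Q_def K_def K'_def arg_def numeral_eq_Suc all_lang_codes_iff[OF inj]
          code_occurs_at_word_code[OF inj] sub_int_code_int_encode)
  qed
  ultimately show ?thesis by (rule decides_on_quadruple_codes[OF inj])
qed

lemma decidable_cylinder_partition:
  fixes \<Omega> :: "(int \<Rightarrow> 'a::finite) set"
  assumes inj: "inj e" and shift_inv: "T ` \<Omega> = \<Omega>"
    and L: "decides f {[word_code e w] | w. True} (\<lambda>xs. \<exists>w. xs = [word_code e w] \<and> w \<in> Lang \<Omega>)"
  shows "\<exists>f. decides f {[fset_code e S] | S. finite S \<and> F S}
    (\<lambda>xs. \<exists>S. xs = [fset_code e S] \<and> finite S \<and> F S \<and> cylinder_partition \<Omega> S w i)"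
proof -
  define K where "K N = 2 * N + word_code e w + int_encode i + 1" for N
  define occ where "occ N c y \<longleftrightarrow>
      code_occurs_at c (sub_int_code (K N) (snd (prod_decode y))) (fst (prod_decode y))" for N c y
  define occ_w where
    "occ_w N c \<longleftrightarrow> code_occurs_at c (sub_int_code (K N) (int_encode i)) (word_code e w)" for N c
  define Q where "Q xs \<longleftrightarrow>
      (\<forall>y<arg xs 0. y \<in> set_decode (arg xs 0) \<longrightarrow> in_lang_code e (Lang \<Omega>) (fst (prod_decode y))) \<and>
      all_lang_codes e (Lang \<Omega>) (2 * K (arg xs 0)) (\<lambda>c.
        (\<forall>y<arg xs 0. \<forall>z<arg xs 0. y \<in> set_decode (arg xs 0) \<and> z \<in> set_decode (arg xs 0) \<and> y \<noteq> z \<longrightarrow>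
           \<not> (occ (arg xs 0) c y \<and> occ (arg xs 0) c z)) \<and>
        (\<forall>y<arg xs 0. y \<in> set_decode (arg xs 0) \<longrightarrow> occ (arg xs 0) c y \<longrightarrow> occ_w (arg xs 0) c) \<and>
        (occ_w (arg xs 0) c \<longrightarrow> (\<exists>y<arg xs 0. y \<in> set_decode (arg xs 0) \<and> occ (arg xs 0) c y)))" for xs
  have "decidable Q"
    unfolding Q_def K_def occ_def occ_w_def
    by (intro decidable_all_lang_codes[OF inj _ L] decidable_in_lang_code[OF inj _ L] decidable_conj
        decidable_imp decidable_not decidable_bounded_all decidable_bounded_ex decidable_mem_set_decode
        decidable_code_occurs_at computable_sub_int_code computable_fst_prod_decode
        computable_snd_prod_decode computable_intros) simp_all
  moreover have "Q [fset_code e S] \<longleftrightarrow> cylinder_partition \<Omega> S w i" if "finite S" for S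
  proof -
    let ?N = "fset_code e S"
    have w_bound: "\<bar>i\<bar> + int (length w) < int (K ?N)"
      using abs_le_int_encode[of i] length_le_word_code[of w e] unfolding K_def by linarith
    have S_bound: "\<forall>p\<in>S. \<bar>snd p\<bar> + int (length (fst p)) < int (K ?N)"
    proof
      fix p assume "p \<in> S"
      from fset_code_bounds[OF \<open>finite S\<close> this, of e]
      show "\<bar>snd p\<bar> + int (length (fst p)) < int (K ?N)"
        unfolding K_def by linarith
    qed
    from cylinder_partition_iff_Lang[OF shift_inv \<open>finite S\<close> w_bound S_bound] show ?thesis
      unfolding Q_def
      by (simp add: arg_def occ_def occ_w_def all_lang_codes_iff[OF inj]
          ball_set_decode_fset_code bex_set_decode_fset_code \<open>finite S\<close>
          ball2_set_decode_fset_code[OF \<open>finite S\<close> inj] prod_decode_pair_code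
          in_lang_code_word_code[OF inj] code_occurs_at_word_code[OF inj] sub_int_code_int_encode)
  qed
  ultimately show ?thesis by (rule decides_on_fset_codes[OF inj])
qed

theorem proposition3p4:
  fixes \<Omega> :: "(int \<Rightarrow> 'a::finite) set"
    and e :: "'a \<Rightarrow> nat"
  assumes enc: "inj e"
    and minimal: "minimal_subshift \<Omega>"
    and no_rep: "\<forall>w\<in>Lm \<Omega> 5. distinct w"
    and recursive: "\<exists>f. decides f {[word_code e w] | w. True}
                        (\<lambda>xs. \<exists>w. xs = [word_code e w] \<and> w \<in> Lang \<Omega>)"
  shows
    "(\<exists>f. decides f
         {[word_code e w, word_code e v, int_encode i, int_encode j] | w v i j.
            w \<in> Lang \<Omega> \<and> v \<in> Lang \<Omega>}
         (\<lambda>xs. \<exists>w v i j. xs = [word_code e w, word_code e v, int_encode i, int_encode j]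
                \<and> cyl \<Omega> v j \<subseteq> cyl \<Omega> w i))
   \<and> (\<exists>f. decides f
         {[word_code e w, word_code e v, int_encode i, int_encode j] | w v i j.
            w \<in> Lang \<Omega> \<and> v \<in> Lang \<Omega>}
         (\<lambda>xs. \<exists>w v i j. xs = [word_code e w, word_code e v, int_encode i, int_encode j]
                \<and> three_disjoint (cyl \<Omega> w i) (cyl \<Omega> v j)))
   \<and> (\<forall>w\<in>Lang \<Omega>. \<forall>i::int. \<exists>f. decides f
         {[fset_code e S] | S. finite S \<and> (\<forall>(s,k)\<in>S. s \<noteq> [])}
         (\<lambda>xs. \<exists>S. xs = [fset_code e S] \<and> finite S \<and> (\<forall>(s,k)\<in>S. s \<noteq> [])
                \<and> cylinder_partition \<Omega> S w i))"
proof -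
  have shift_inv: "T ` \<Omega> = \<Omega>" using minimal by (simp add: minimal_subshift_def)
  from recursive obtain f where L: "decides f {[word_code e w] | w. True}
      (\<lambda>xs. \<exists>w. xs = [word_code e w] \<and> w \<in> Lang \<Omega>)" by blast
  have dom: "{[word_code e w, word_code e v, int_encode i, int_encode j] | w v i j.
        w \<in> Lang \<Omega> \<and> v \<in> Lang \<Omega>}
      \<subseteq> {[word_code e w, word_code e v, int_encode i, int_encode j] | w v i j. True}"
    by blast
  show ?thesis
    by (intro conjI ballI allI ex_decides_mono[OF decidable_cyl_subset[OF enc shift_inv L] dom]
        ex_decides_mono[OF decidable_three_disjoint[OF enc shift_inv L] dom]
        decidable_cylinder_partition[OF enc shift_inv L])
qed

end
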